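(* Let $n\ge2$, let $A\in\mathbb{Z}^{m\times n}$ have full column rank, and let $b\in\mathbb{Z}^m$ be such that $P=\{x\in\mathbb{R}^n:Ax\le b\}$ is full-dimensional, $P\cap\mathbb{Z}^n=\emptyset$, and each row of $A$ defines a facet of $P$. Then there exists a row $a^\top$ of $A$ such that $w^{a}(P)\le\pi(A)-1$.
   Context: $w^{a}(P)=\max_{x\in P}a^\top x-\min_{y\in P}a^\top y$. The parameter $\pi(A)$ is defined as \[ \pi(A)=\max_{\substack{b'\in\mathbb{Z}^m:\\ P(A,b')\cap\mathbb{Z}^n\neq\emptyset}}\ \max_{x^*\text{ vertex of }P(A,b')}\ \min_{z^*\in P(A,b')\cap\mathbb{Z}^n}\|A(x^*-z^* )\|_\infty, \] where $P(A,b')=\{x\in\mathbb{R}^n:Ax\le b'\}$. *)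

theory Defs
  imports "HOL-Analysis.Analysis"
begin

definition real_mat :: "int^'n^'m \<Rightarrow> real^'n^'m" where
  "real_mat A = (\<chi> i j. real_of_int (A $ i $ j))"

definition polyh :: "int^'n^'m \<Rightarrow> int^'m \<Rightarrow> (real^'n) set" where
  "polyh A b = {x. \<forall>i. (real_mat A *v x) $ i \<le> real_of_int (b $ i)}"

definition int_points :: "(real^'n) set" where
  "int_points = {z. \<forall>j. z $ j \<in> \<int>}"

text \<open>Width w^a(P) = max_{x in P} a x - min_{y in P} a y, taken in the extended reals
  (equal to the max/min when attained; infinite when P is unbounded in direction a).\<close>
definition width_dir :: "real^'n \<Rightarrow> (real^'n) set \<Rightarrow> ereal" where
  "width_dir a P = (SUP x\<in>P. ereal (a \<bullet> x)) - (INF y\<in>P. ereal (a \<bullet> y))"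

definition pi_param :: "int^'n^'m \<Rightarrow> ereal" where
  "pi_param A =
     (SUP b' \<in> {b'. polyh A b' \<inter> int_points \<noteq> {}}.
        SUP xs \<in> {x. x extreme_point_of polyh A b'}.
          INF zs \<in> polyh A b' \<inter> int_points.
            ereal (infnorm (real_mat A *v (xs - zs))))"

end

theory Submission
  imports Defs "HOL-Analysis.Kronecker_Approximation_Theorem"
begin

text \<open>Take an integer point \<open>z\<^sub>0\<close> minimising the total violation of \<open>A x \<le> b\<close> and relax \<open>b\<close>
  to \<open>b' = max b (A z\<^sub>0)\<close>. By minimality, every integer point of \<open>P(A,b')\<close> is tight on every
  relaxed row. If some relaxed row \<open>a\<^sub>k\<close> is bounded below on \<open>P(A,b')\<close>, it attains its minimum
  at a vertex \<open>v\<close> (full column rank makes the polyhedron pointed); then \<open>b'\<^sub>k - a\<^sub>k v\<close> is at most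
  \<open>\<parallel>A(v - z)\<parallel>\<^sub>\<infinity>\<close> for every integer point \<open>z\<close> of \<open>P(A,b')\<close>, hence at most \<open>\<pi>(A)\<close>, while the width
  of \<open>P \<subseteq> P(A,b')\<close> in direction \<open>a\<^sub>k\<close> is at most \<open>b\<^sub>k - a\<^sub>k v \<le> b'\<^sub>k - 1 - a\<^sub>k v\<close>. Otherwise a recession direction decreases all
  relaxed rows strictly; a simultaneous Dirichlet approximation turns it into an integer direction,
  which moves \<open>z\<^sub>0\<close> to an integer point of \<open>P(A,b')\<close> that is not tight, a contradiction.\<close>

definition ineq_polyhedron :: "real^'n^'m \<Rightarrow> real^'m \<Rightarrow> (real^'n) set" where
  "ineq_polyhedron R \<beta> = {x. \<forall>j. R$j \<bullet> x \<le> \<beta>$j}"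

definition slack_rows :: "real^'n^'m \<Rightarrow> real^'m \<Rightarrow> real^'n \<Rightarrow> 'm set" where
  "slack_rows R \<beta> x = {j. R$j \<bullet> x < \<beta>$j}"

definition basic_point :: "real^'n^'m \<Rightarrow> real^'m \<Rightarrow> real^'n \<Rightarrow> bool" where
  "basic_point R \<beta> x \<longleftrightarrow> x \<in> ineq_polyhedron R \<beta> \<and>
     (\<forall>d. (\<forall>j. R$j \<bullet> x = \<beta>$j \<longrightarrow> R$j \<bullet> d = 0) \<longrightarrow> d = 0)"

lemma basic_point_extreme_point:
  assumes "basic_point R \<beta> x"
  shows "x extreme_point_of ineq_polyhedron R \<beta>"
proof -
  have "x = y" if y: "y \<in> ineq_polyhedron R \<beta>" and z: "z \<in> ineq_polyhedron R \<beta>"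
    and "x \<in> open_segment y z" for y z
  proof -
    obtain u where u: "0 < u" "u < 1" and x_eq: "x = (1 - u) *\<^sub>R y + u *\<^sub>R z"
      using \<open>x \<in> open_segment y z\<close> by (auto simp: in_segment)
    have "R$j \<bullet> (y - x) = 0" if tight: "R$j \<bullet> x = \<beta>$j" for j
    proof -
      have "R$j \<bullet> y \<le> \<beta>$j" "R$j \<bullet> z \<le> \<beta>$j"
        using y z by (auto simp: ineq_polyhedron_def)
      moreover have "(1 - u) * (\<beta>$j - R$j \<bullet> y) + u * (\<beta>$j - R$j \<bullet> z) = 0"
        using tight by (simp add: x_eq inner_add_right algebra_simps)
      ultimately have "(1 - u) * (\<beta>$j - R$j \<bullet> y) = 0"
        using u by (simp add: add_nonneg_eq_0_iff)
      then show ?thesis using u tight by (simp add: inner_diff_right)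
    qed
    then have "y - x = 0"
      using assms unfolding basic_point_def by blast
    then show "x = y" by simp
  qed
  then show ?thesis
    using assms by (auto simp: extreme_point_of_def basic_point_def open_segment_def)
qed

lemma finite_basic_points: "finite {x. basic_point R \<beta> x}"
proof -
  let ?tight = "\<lambda>x. {j. R$j \<bullet> x = \<beta>$j}"
  have "inj_on ?tight {x. basic_point R \<beta> x}"
  proof (rule inj_onI)
    fix x y assume "x \<in> {x. basic_point R \<beta> x}" and same: "?tight x = ?tight y"
    then have "\<forall>d. (\<forall>j. R$j \<bullet> x = \<beta>$j \<longrightarrow> R$j \<bullet> d = 0) \<longrightarrow> d = 0"
      by (simp add: basic_point_def)
    moreover have "\<forall>j. R$j \<bullet> x = \<beta>$j \<longrightarrow> R$j \<bullet> (x - y) = 0"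
      using same by (auto simp: inner_diff_right set_eq_iff)
    ultimately have "x - y = 0" by blast
    then show "x = y" by simp
  qed
  then show ?thesis
    by (rule finite_imageD[rotated]) simp
qed

lemma nonbasic_descent_direction:
  fixes R :: "real^'n^'m"
  assumes inj: "inj ((*v) R)"
    and bounded: "\<And>d. \<forall>j. R$j \<bullet> d \<le> 0 \<Longrightarrow> 0 \<le> c \<bullet> d"
    and "x \<in> ineq_polyhedron R \<beta>" and "\<not> basic_point R \<beta> x"
  obtains d where "\<forall>j. R$j \<bullet> x = \<beta>$j \<longrightarrow> R$j \<bullet> d = 0" "c \<bullet> d \<le> 0" "\<exists>j. 0 < R$j \<bullet> d"
proof -
  obtain d0 where tight0: "\<forall>j. R$j \<bullet> x = \<beta>$j \<longrightarrow> R$j \<bullet> d0 = 0" and "d0 \<noteq> 0"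
    using assms(3,4) by (auto simp: basic_point_def)
  define d where "d = (if c \<bullet> d0 \<le> 0 then d0 else - d0)"
  have tight: "\<forall>j. R$j \<bullet> x = \<beta>$j \<longrightarrow> R$j \<bullet> d = 0" and "c \<bullet> d \<le> 0" and "d \<noteq> 0"
    using tight0 \<open>d0 \<noteq> 0\<close> by (auto simp: d_def)
  show thesis
  proof (cases "\<exists>j. 0 < R$j \<bullet> d")
    case True
    with tight \<open>c \<bullet> d \<le> 0\<close> show thesis by (rule that)
  next
    case False
    then have "c \<bullet> d = 0"
      using bounded[of d] \<open>c \<bullet> d \<le> 0\<close> by (auto simp: not_less)
    have "R *v d \<noteq> 0"
      using injD[OF inj, of d 0] \<open>d \<noteq> 0\<close> by auto
    then obtain j where "R$j \<bullet> d \<noteq> 0"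
      by (auto simp: vec_eq_iff matrix_vector_mul_component)
    moreover have "R$j \<bullet> d \<le> 0"
      using False by (simp add: not_less)
    ultimately have "0 < R$j \<bullet> - d" by simp
    with tight \<open>c \<bullet> d = 0\<close> show thesis
      by (intro that[of "- d"]) auto
  qed
qed

lemma ray_step_shrinks_slack:
  assumes x: "x \<in> ineq_polyhedron R \<beta>"
    and tight: "\<forall>j. R$j \<bullet> x = \<beta>$j \<longrightarrow> R$j \<bullet> d = 0" and "\<exists>j. 0 < R$j \<bullet> d"
  obtains t where "0 < t" "x + t *\<^sub>R d \<in> ineq_polyhedron R \<beta>"
    "slack_rows R \<beta> (x + t *\<^sub>R d) \<subset> slack_rows R \<beta> x"
proof -
  define J where "J = {j. 0 < R$j \<bullet> d}"
  define t where "t = Min ((\<lambda>j. (\<beta>$j - R$j \<bullet> x) / (R$j \<bullet> d)) ` J)"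
  have "J \<noteq> {}" using \<open>\<exists>j. 0 < R$j \<bullet> d\<close> by (simp add: J_def)
  then have "t \<in> (\<lambda>j. (\<beta>$j - R$j \<bullet> x) / (R$j \<bullet> d)) ` J"
    unfolding t_def by (intro Min_in) auto
  then obtain j0 where "j0 \<in> J" and t_eq: "t = (\<beta>$j0 - R$j0 \<bullet> x) / (R$j0 \<bullet> d)"
    by blast
  have le_t: "t * (R$j \<bullet> d) \<le> \<beta>$j - R$j \<bullet> x" if "j \<in> J" for j
  proof -
    have "t \<le> (\<beta>$j - R$j \<bullet> x) / (R$j \<bullet> d)"
      unfolding t_def using that by (intro Min_le) auto
    then show ?thesis using that by (simp add: J_def le_divide_eq)
  qed
  have x_le: "R$j \<bullet> x \<le> \<beta>$j" for j
    using x by (simp add: ineq_polyhedron_def)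
  have slack_J: "R$j \<bullet> x < \<beta>$j" if "j \<in> J" for j
    using that tight x_le[of j] by (force simp: J_def less_le)
  have "0 < t"
    using \<open>j0 \<in> J\<close> slack_J[OF \<open>j0 \<in> J\<close>] by (simp add: t_eq J_def)
  have step: "R$j \<bullet> (x + t *\<^sub>R d) = R$j \<bullet> x + t * (R$j \<bullet> d)" for j
    by (simp add: inner_add_right)
  have "R$j \<bullet> (x + t *\<^sub>R d) \<le> \<beta>$j" for j
  proof (cases "j \<in> J")
    case True
    then show ?thesis using le_t[OF True] step[of j] by simp
  next
    case False
    then have "t * (R$j \<bullet> d) \<le> 0"
      using \<open>0 < t\<close> by (simp add: J_def mult_nonneg_nonpos)
    then show ?thesis using step x_le[of j] by simp
  qed
  moreover have "slack_rows R \<beta> (x + t *\<^sub>R d) \<subseteq> slack_rows R \<beta> x"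
    using tight x_le step by (fastforce simp: slack_rows_def order.order_iff_strict)
  moreover have "j0 \<in> slack_rows R \<beta> x - slack_rows R \<beta> (x + t *\<^sub>R d)"
    using slack_J[OF \<open>j0 \<in> J\<close>] \<open>j0 \<in> J\<close> step[of j0] by (simp add: slack_rows_def t_eq J_def)
  ultimately show thesis
    using \<open>0 < t\<close> that by (auto simp: ineq_polyhedron_def)
qed

lemma exists_basic_point_le:
  fixes R :: "real^'n^'m"
  assumes inj: "inj ((*v) R)"
    and bounded: "\<And>d. \<forall>j. R$j \<bullet> d \<le> 0 \<Longrightarrow> 0 \<le> c \<bullet> d"
    and "x \<in> ineq_polyhedron R \<beta>"
  shows "\<exists>v. basic_point R \<beta> v \<and> c \<bullet> v \<le> c \<bullet> x"
  using assms(3)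
proof (induction "card (slack_rows R \<beta> x)" arbitrary: x rule: less_induct)
  case less
  show ?case
  proof (cases "basic_point R \<beta> x")
    case False
    obtain d where d: "\<forall>j. R$j \<bullet> x = \<beta>$j \<longrightarrow> R$j \<bullet> d = 0" "c \<bullet> d \<le> 0" "\<exists>j. 0 < R$j \<bullet> d"
      using nonbasic_descent_direction[OF inj bounded less.prems False] by blast
    obtain t where "0 < t" and x': "x + t *\<^sub>R d \<in> ineq_polyhedron R \<beta>"
      and shrink: "slack_rows R \<beta> (x + t *\<^sub>R d) \<subset> slack_rows R \<beta> x"
      using ray_step_shrinks_slack[OF less.prems d(1,3)] .
    have "card (slack_rows R \<beta> (x + t *\<^sub>R d)) < card (slack_rows R \<beta> x)"
      using shrink by (rule psubset_card_mono[rotated]) simp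
    then obtain v where "basic_point R \<beta> v" "c \<bullet> v \<le> c \<bullet> (x + t *\<^sub>R d)"
      using less.hyps x' by blast
    moreover have "c \<bullet> (x + t *\<^sub>R d) \<le> c \<bullet> x"
      using \<open>0 < t\<close> d(2) by (simp add: inner_add_right mult_nonneg_nonpos)
    ultimately show ?thesis by force
  qed auto
qed

lemma ineq_polyhedron_min_at_extreme_point:
  fixes R :: "real^'n^'m"
  assumes inj: "inj ((*v) R)"
    and bounded: "\<And>d. \<forall>j. R$j \<bullet> d \<le> 0 \<Longrightarrow> 0 \<le> c \<bullet> d"
    and "ineq_polyhedron R \<beta> \<noteq> {}"
  obtains v where "v extreme_point_of ineq_polyhedron R \<beta>"
    "\<And>y. y \<in> ineq_polyhedron R \<beta> \<Longrightarrow> c \<bullet> v \<le> c \<bullet> y"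
proof -
  let ?V = "{x. basic_point R \<beta> x}"
  have "?V \<noteq> {}"
    using exists_basic_point_le[OF inj bounded] assms(3) by blast
  then have "Min ((\<bullet>) c ` ?V) \<in> (\<bullet>) c ` ?V"
    using finite_basic_points by (intro Min_in) auto
  then obtain v where "v \<in> ?V" and v_min: "c \<bullet> v = Min ((\<bullet>) c ` ?V)"
    by force
  have "c \<bullet> v \<le> c \<bullet> y" if y: "y \<in> ineq_polyhedron R \<beta>" for y
  proof -
    obtain w where w: "basic_point R \<beta> w" and "c \<bullet> w \<le> c \<bullet> y"
      using exists_basic_point_le[OF inj bounded y] by blast
    moreover have "c \<bullet> v \<le> c \<bullet> w"
      unfolding v_min using w finite_basic_points by (intro Min_le) auto
    ultimately show ?thesis by linarith
  qed
  with \<open>v \<in> ?V\<close> show thesis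
    by (intro that basic_point_extreme_point) auto
qed

definition of_int_vec :: "int^'n \<Rightarrow> real^'n" where
  "of_int_vec p = (\<chi> j. real_of_int (p$j))"

lemma real_mat_row_inner_of_int_vec:
  "real_mat A $ j \<bullet> of_int_vec p = real_of_int ((A *v p)$j)"
  by (simp add: matrix_vector_mult_def real_mat_def inner_vec_def of_int_vec_def)

lemma polyh_eq_ineq_polyhedron: "polyh A \<beta> = ineq_polyhedron (real_mat A) (of_int_vec \<beta>)"
  by (simp add: polyh_def ineq_polyhedron_def matrix_vector_mul_component of_int_vec_def)

lemma of_int_vec_in_polyh_iff: "of_int_vec p \<in> polyh A \<beta> \<longleftrightarrow> (\<forall>j. (A *v p)$j \<le> \<beta>$j)"
  by (simp add: polyh_def matrix_vector_mul_component real_mat_row_inner_of_int_vec)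

lemma int_points_eq_range_of_int_vec: "int_points = range of_int_vec"
proof (intro set_eqI iffI)
  fix z :: "real^'n" assume "z \<in> int_points"
  then have "z = of_int_vec (\<chi> j. \<lfloor>z$j\<rfloor>)"
    by (simp add: int_points_def of_int_vec_def vec_eq_iff)
  then show "z \<in> range of_int_vec" by blast
qed (auto simp: int_points_def of_int_vec_def)

lemma simultaneous_approx_vec:
  fixes d :: "real^'n" and N :: nat
  assumes "N > 0"
  obtains q :: int and p :: "int^'n" where "0 < q" "\<And>i. \<bar>of_int q * d$i - of_int (p$i)\<bar> < 1 / N"
proof -
  obtain h where h: "bij_betw h {0..<CARD('n)} (UNIV :: 'n set)"
    using ex_bij_betw_nat_finite[of "UNIV :: 'n set"] by auto
  obtain q p where "0 < q" and p: "\<And>k. k < CARD('n) \<Longrightarrow> \<bar>of_int q * d $ h k - of_int (p k)\<bar> < 1 / N"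
    using Dirichlet_approx_simult[OF assms, where \<theta>="\<lambda>k. d $ h k" and n="CARD('n)"] by blast
  have "\<bar>of_int q * d$i - of_int (p (inv_into {0..<CARD('n)} h i))\<bar> < 1 / N" for i
  proof -
    have "inv_into {0..<CARD('n)} h i < CARD('n)"
      using h by (metis UNIV_I atLeastLessThan_iff bij_betw_def inv_into_into)
    with p show ?thesis
      using h by (metis UNIV_I bij_betw_inv_into_right)
  qed
  then show thesis
    by (intro that[OF \<open>0 < q\<close>, of "\<chi> i. p (inv_into {0..<CARD('n)} h i)"]) simp
qed

text \<open>Approximate \<open>d\<close> by \<open>p / q\<close> so well that \<open>A p\<close> stays within distance 1 of \<open>q A d\<close>.\<close>
lemma integer_direction:
  fixes A :: "int^'n^'m" and d :: "real^'n"
  assumes "\<And>j. real_mat A $ j \<bullet> d \<le> 0" and "\<And>k. k \<in> S \<Longrightarrow> real_mat A $ k \<bullet> d \<le> -1"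
  obtains p where "\<And>j. (A *v p)$j \<le> 0" "\<And>k. k \<in> S \<Longrightarrow> (A *v p)$k < 0"
proof -
  define R where "R = real_mat A"
  define M where "M = (\<Sum>j\<in>UNIV. \<Sum>i\<in>UNIV. \<bar>R$j$i\<bar>)"
  define N :: nat where "N = nat \<lceil>M\<rceil> + 1"
  have "M \<ge> 0"
    unfolding M_def by (intro sum_nonneg) auto
  then have "M < N"
    by (simp add: N_def) linarith
  then have "N > 0" and "M / N < 1"
    using \<open>M \<ge> 0\<close> by auto
  obtain q p where "0 < q" and approx: "\<And>i. \<bar>of_int q * d$i - of_int (p$i)\<bar> < 1 / N"
    using simultaneous_approx_vec[OF \<open>N > 0\<close>] by blast
  have close: "real_of_int ((A *v p)$j) < of_int q * (R$j \<bullet> d) + 1" for j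
  proof -
    have "of_int q * (R$j \<bullet> d) - real_of_int ((A *v p)$j) = (\<Sum>i\<in>UNIV. R$j$i * (of_int q * d$i - of_int (p$i)))"
      by (simp add: real_mat_row_inner_of_int_vec[symmetric] R_def inner_vec_def of_int_vec_def
          sum_subtractf sum_distrib_left algebra_simps)
    also have "\<dots> \<ge> - (\<Sum>i\<in>UNIV. \<bar>R$j$i\<bar> * (1 / N))"
    proof -
      have "\<bar>R$j$i * (of_int q * d$i - of_int (p$i))\<bar> \<le> \<bar>R$j$i\<bar> * (1 / N)" for i
        using approx[of i] by (simp add: abs_mult mult_left_mono flip: times_divide_eq_right)
      then have "\<bar>\<Sum>i\<in>UNIV. R$j$i * (of_int q * d$i - of_int (p$i))\<bar> \<le> (\<Sum>i\<in>UNIV. \<bar>R$j$i\<bar> * (1 / N))"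
        by (rule order_trans[OF sum_abs sum_mono])
      then show ?thesis by linarith
    qed
    moreover have "(\<Sum>i\<in>UNIV. \<bar>R$j$i\<bar> * (1 / N)) \<le> M / N"
    proof -
      have "(\<Sum>i\<in>UNIV. \<bar>R$j$i\<bar>) \<le> M"
        unfolding M_def by (rule member_le_sum) (auto intro: sum_nonneg)
      then show ?thesis
        by (simp add: sum_divide_distrib[symmetric] divide_right_mono)
    qed
    ultimately show ?thesis using \<open>M / N < 1\<close> by linarith
  qed
  show thesis
  proof (rule that)
    show "(A *v p)$j \<le> 0" for j
    proof -
      have "of_int q * (R$j \<bullet> d) \<le> 0"
        using assms(1)[of j] \<open>0 < q\<close> by (simp add: R_def mult_nonneg_nonpos)
      then show ?thesis using close[of j] by linarith
    qed
    show "(A *v p)$k < 0" if "k \<in> S" for k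
    proof -
      have "of_int q * (R$k \<bullet> d) \<le> R$k \<bullet> d"
        using \<open>0 < q\<close> assms(2)[OF that] by (simp add: R_def mult_le_cancel_right1)
      then have "real_of_int ((A *v p)$k) < 0"
        using close[of k] assms(2)[OF that] unfolding R_def by linarith
      then show ?thesis by simp
    qed
  qed
qed

lemma integer_recession_direction:
  fixes A :: "int^'n^'m"
  assumes "\<And>k. k \<in> S \<Longrightarrow> \<exists>d. (\<forall>j. real_mat A $ j \<bullet> d \<le> 0) \<and> real_mat A $ k \<bullet> d < 0"
  obtains p where "\<And>j. (A *v p)$j \<le> 0" "\<And>k. k \<in> S \<Longrightarrow> (A *v p)$k < 0"
proof -
  define R where "R = real_mat A"
  have "\<exists>d. (\<forall>j. R$j \<bullet> d \<le> 0) \<and> R$k \<bullet> d \<le> -1" if k: "k \<in> S" for k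
  proof -
    obtain d where d: "\<forall>j. R$j \<bullet> d \<le> 0" "R$k \<bullet> d < 0"
      using assms[OF k] by (auto simp: R_def)
    then have "\<forall>j. R$j \<bullet> ((1 / - (R$k \<bullet> d)) *\<^sub>R d) \<le> 0" "R$k \<bullet> ((1 / - (R$k \<bullet> d)) *\<^sub>R d) = -1"
      by (auto simp: divide_nonpos_neg)
    then show ?thesis by fastforce
  qed
  then obtain dk where dk: "\<And>k j. k \<in> S \<Longrightarrow> R$j \<bullet> dk k \<le> 0" "\<And>k. k \<in> S \<Longrightarrow> R$k \<bullet> dk k \<le> -1"
    by metis
  define d where "d = (\<Sum>k\<in>S. dk k)"
  have "R$j \<bullet> d \<le> 0" for j
    unfolding d_def inner_sum_right using dk(1) by (auto intro: sum_nonpos)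
  moreover have "R$k \<bullet> d \<le> -1" if "k \<in> S" for k
  proof -
    have "R$k \<bullet> d = R$k \<bullet> dk k + (\<Sum>k'\<in>S - {k}. R$k \<bullet> dk k')"
      unfolding d_def inner_sum_right using that by (simp add: sum.remove)
    moreover have "(\<Sum>k'\<in>S - {k}. R$k \<bullet> dk k') \<le> 0"
      using dk(1) by (auto intro: sum_nonpos)
    ultimately show ?thesis using dk(2)[OF that] by linarith
  qed
  ultimately show thesis
    using integer_direction that unfolding R_def by blast
qed

lemma minimal_integer_relaxation:
  fixes A :: "int^'n^'m" and b :: "int^'m"
  assumes "polyh A b \<inter> int_points = {}"
  obtains b' where "\<And>j. b$j \<le> b'$j" "\<exists>k. b$k < b'$k" "polyh A b' \<inter> int_points \<noteq> {}"
    "\<And>z k. z \<in> polyh A b' \<inter> int_points \<Longrightarrow> b$k < b'$k \<Longrightarrow> real_mat A $ k \<bullet> z = b'$k"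
proof -
  define violation :: "int^'n \<Rightarrow> nat"
    where "violation z = (\<Sum>j\<in>UNIV. nat ((A *v z)$j - b$j))" for z
  obtain z0 where z0_min: "\<And>z. violation z0 \<le> violation z"
    using ex_has_least_nat[of "\<lambda>_. True" 0 violation] by auto
  define b' where "b' = (\<chi> j. max (b$j) ((A *v z0)$j))"
  have tight: "(A *v z)$k = b'$k" if z: "\<forall>j. (A *v z)$j \<le> b'$j" and k: "b$k < b'$k" for z k
  proof (rule ccontr)
    assume "(A *v z)$k \<noteq> b'$k"
    have "violation z < violation z0" unfolding violation_def
    proof (rule sum_strict_mono_ex1)
      show "\<forall>j\<in>UNIV. nat ((A *v z)$j - b$j) \<le> nat ((A *v z0)$j - b$j)"
      proof
        fix j
        have "(A *v z)$j \<le> max (b$j) ((A *v z0)$j)"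
          using z by (simp add: b'_def)
        then show "nat ((A *v z)$j - b$j) \<le> nat ((A *v z0)$j - b$j)" by linarith
      qed
      have "b'$k = (A *v z0)$k" "b$k < (A *v z0)$k"
        using k by (auto simp: b'_def)
      moreover have "(A *v z)$k < b'$k"
        using z \<open>(A *v z)$k \<noteq> b'$k\<close> by (simp add: order.not_eq_order_implies_strict)
      ultimately show "\<exists>j\<in>UNIV. nat ((A *v z)$j - b$j) < nat ((A *v z0)$j - b$j)" by auto
    qed simp
    with z0_min[of z] show False by simp
  qed
  show thesis
  proof (rule that)
    show "b$j \<le> b'$j" for j by (simp add: b'_def)
    have "of_int_vec z0 \<in> polyh A b'"
      by (simp add: of_int_vec_in_polyh_iff b'_def)
    then show "polyh A b' \<inter> int_points \<noteq> {}"
      by (auto simp: int_points_eq_range_of_int_vec)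
    have "of_int_vec z0 \<notin> polyh A b"
      using assms by (auto simp: int_points_eq_range_of_int_vec)
    then show "\<exists>k. b$k < b'$k"
      by (auto simp: of_int_vec_in_polyh_iff b'_def not_le max_def)
    show "real_mat A $ k \<bullet> z = b'$k" if "z \<in> polyh A b' \<inter> int_points" "b$k < b'$k" for z k
      using that tight by (auto simp: int_points_eq_range_of_int_vec of_int_vec_in_polyh_iff
          real_mat_row_inner_of_int_vec)
  qed
qed

lemma width_dir_le:
  assumes "\<And>x. x \<in> P \<Longrightarrow> a \<bullet> x \<le> u" and "\<And>y. y \<in> P \<Longrightarrow> l \<le> a \<bullet> y"
  shows "width_dir a P \<le> ereal (u - l)"
proof -
  have "width_dir a P \<le> ereal u - ereal l"
    unfolding width_dir_def using assms by (intro ereal_minus_mono SUP_least INF_greatest) auto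
  then show ?thesis by simp
qed

lemma pi_param_lower_bound:
  assumes "polyh A b' \<inter> int_points \<noteq> {}" and "v extreme_point_of polyh A b'"
    and "\<And>z. z \<in> polyh A b' \<inter> int_points \<Longrightarrow> r \<le> infnorm (real_mat A *v (v - z))"
  shows "ereal r \<le> pi_param A"
  unfolding pi_param_def
  using assms by (intro SUP_upper2[where i=b'] SUP_upper2[where i=v] INF_greatest) auto

lemma polyh_mono:
  assumes "\<And>j. b$j \<le> b'$j"
  shows "polyh A b \<subseteq> polyh A b'"
proof -
  have "real_of_int (b$j) \<le> real_of_int (b'$j)" for j
    using assms by simp
  then show ?thesis
    unfolding polyh_def by (blast intro: order_trans)
qed

lemma tight_relaxation_has_bounded_row:
  fixes A :: "int^'n^'m"
  assumes "polyh A b' \<inter> int_points \<noteq> {}" and "k0 \<in> S"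
    and tight: "\<And>z k. z \<in> polyh A b' \<inter> int_points \<Longrightarrow> k \<in> S \<Longrightarrow> real_mat A $ k \<bullet> z = b'$k"
  obtains k where "k \<in> S" "\<And>d. \<forall>j. real_mat A $ j \<bullet> d \<le> 0 \<Longrightarrow> 0 \<le> real_mat A $ k \<bullet> d"
proof -
  have "\<exists>k\<in>S. \<forall>d. (\<forall>j. real_mat A $ j \<bullet> d \<le> 0) \<longrightarrow> 0 \<le> real_mat A $ k \<bullet> d"
  proof (rule ccontr)
    assume "\<not> ?thesis"
    then have recession: "\<exists>d. (\<forall>j. real_mat A $ j \<bullet> d \<le> 0) \<and> real_mat A $ k \<bullet> d < 0"
      if "k \<in> S" for k
      using that by (auto simp: not_le)
    obtain p where p_cone: "\<And>j. (A *v p)$j \<le> 0" and p_neg: "\<And>k. k \<in> S \<Longrightarrow> (A *v p)$k < 0"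
      using integer_recession_direction[OF recession] by blast
    obtain z0 where z0: "of_int_vec z0 \<in> polyh A b'"
      using assms(1) by (auto simp: int_points_eq_range_of_int_vec)
    have Az: "(A *v (z0 + p))$j = (A *v z0)$j + (A *v p)$j" for j
      by (simp add: matrix_vector_right_distrib)
    have z0_le: "(A *v z0)$j \<le> b'$j" for j
      using z0 by (simp add: of_int_vec_in_polyh_iff)
    have "(A *v (z0 + p))$j \<le> b'$j" for j
      using Az[of j] z0_le[of j] p_cone[of j] by linarith
    then have "of_int_vec (z0 + p) \<in> polyh A b' \<inter> int_points"
      by (simp add: of_int_vec_in_polyh_iff int_points_eq_range_of_int_vec)
    then have "(A *v (z0 + p))$k0 = b'$k0"
      using tight[OF _ \<open>k0 \<in> S\<close>, of "of_int_vec (z0 + p)"]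
      by (simp add: real_mat_row_inner_of_int_vec)
    moreover have "(A *v (z0 + p))$k0 < b'$k0"
      using Az[of k0] z0_le[of k0] p_neg[OF \<open>k0 \<in> S\<close>] by linarith
    ultimately show False by simp
  qed
  then show thesis
    using that by blast
qed

lemma width_le_pi_param_at_tight_row:
  fixes A :: "int^'n^'m"
  assumes inj: "inj ((*v) (real_mat A))"
    and "\<And>j. b$j \<le> b'$j" and "b$k < b'$k"
    and tight: "\<And>z. z \<in> polyh A b' \<inter> int_points \<Longrightarrow> real_mat A $ k \<bullet> z = b'$k"
    and nonempty: "polyh A b' \<inter> int_points \<noteq> {}"
    and bounded: "\<And>d. \<forall>j. real_mat A $ j \<bullet> d \<le> 0 \<Longrightarrow> 0 \<le> real_mat A $ k \<bullet> d"
  shows "width_dir (real_mat A $ k) (polyh A b) \<le> pi_param A - 1"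
proof -
  have "ineq_polyhedron (real_mat A) (of_int_vec b') \<noteq> {}"
    using nonempty by (auto simp: polyh_eq_ineq_polyhedron)
  then obtain v where v: "v extreme_point_of polyh A b'"
    and v_min: "\<And>y. y \<in> polyh A b' \<Longrightarrow> real_mat A $ k \<bullet> v \<le> real_mat A $ k \<bullet> y"
    unfolding polyh_eq_ineq_polyhedron
    using ineq_polyhedron_min_at_extreme_point[OF inj, where c = "real_mat A $ k", OF bounded] by blast
  define r where "r = real_of_int (b'$k) - real_mat A $ k \<bullet> v"
  have "r \<le> infnorm (real_mat A *v (v - z))" if "z \<in> polyh A b' \<inter> int_points" for z
  proof -
    have "r = - (real_mat A *v (v - z))$k"
      using tight[OF that] by (simp add: r_def matrix_vector_mul_component inner_diff_right)
    then show ?thesis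
      using component_le_infnorm_cart[of "real_mat A *v (v - z)" k] by linarith
  qed
  then have pi_ge: "ereal r \<le> pi_param A"
    using pi_param_lower_bound nonempty v by blast
  have "width_dir (real_mat A $ k) (polyh A b) \<le> ereal (b$k - real_mat A $ k \<bullet> v)"
    using v_min polyh_mono[OF assms(2)]
    by (intro width_dir_le) (auto simp: polyh_def matrix_vector_mul_component)
  also have "\<dots> \<le> ereal (r - 1)"
  proof -
    have "real_of_int (b$k) + 1 \<le> real_of_int (b'$k)"
      using \<open>b$k < b'$k\<close> by linarith
    then show ?thesis by (simp add: r_def)
  qed
  also have "\<dots> = ereal r - 1"
    by (simp add: one_ereal_def)
  also have "\<dots> \<le> pi_param A - 1"
    using pi_ge by (rule ereal_minus_mono) simp
  finally show ?thesis .
qed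

theorem lemma9:
  fixes A :: "int^'n^'m" and b :: "int^'m"
  assumes "CARD('n) \<ge> 2"
    and "rank (real_mat A) = CARD('n)"
    and "aff_dim (polyh A b) = int CARD('n)"
    and "polyh A b \<inter> int_points = {}"
    and "\<forall>i. {x \<in> polyh A b. real_mat A $ i \<bullet> x = real_of_int (b $ i)} facet_of polyh A b"
  shows "\<exists>i. width_dir (real_mat A $ i) (polyh A b) \<le> pi_param A - 1"
proof -
  have inj: "inj ((*v) (real_mat A))"
    using assms(2) full_rank_injective by blast
  obtain b' where b_le: "\<And>j. b$j \<le> b'$j" and "\<exists>k. b$k < b'$k"
    and nonempty: "polyh A b' \<inter> int_points \<noteq> {}"
    and tight: "\<And>z k. z \<in> polyh A b' \<inter> int_points \<Longrightarrow> b$k < b'$k \<Longrightarrow> real_mat A $ k \<bullet> z = b'$k"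
    using minimal_integer_relaxation[OF assms(4)] by blast
  then obtain k0 where "k0 \<in> {k. b$k < b'$k}"
    by blast
  then obtain k where "b$k < b'$k"
    and bounded: "\<And>d. \<forall>j. real_mat A $ j \<bullet> d \<le> 0 \<Longrightarrow> 0 \<le> real_mat A $ k \<bullet> d"
    using tight_relaxation_has_bounded_row[OF nonempty] tight by blast
  then show ?thesis
    using width_le_pi_param_at_tight_row[OF inj b_le _ tight nonempty] by blast
qed

end
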